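(* If a subset $\mathcal S\subseteq\mathbb{R}^3$ generated by a pair of distinct lines is planar (contained in a plane), then $\mathcal S$ has a unique pair of generating lines. Moreover, letting $d$ be the distance between the two half planes that comprise $\mathcal S$, the generating lines are the two parallel lines in the $xy$-plane at distance $d/2$ from the projection of $\mathcal S$ to the $xy$-plane.
   Context: For distinct lines $L_1,L_2$ in the plane, the subset of $\mathbb{R}^3$ generated by them is the set of all points $(x,y,\pm z)$ such that $2z$ is the length of a line segment with one endpoint on $L_1$, the other on $L_2$, and midpoint $(x,y)$; $L_1,L_2$ are called a pair of generating lines for this set. *)

theory Defs
  imports "HOL-Analysis.Analysis"
begin

definition plane_line :: "(real \<times> real) set \<Rightarrow> bool" where
  "plane_line L \<longleftrightarrow> (\<exists>a v. v \<noteq> 0 \<and> L = {a + t *\<^sub>R v | t. True})"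

definition generated_set :: "(real \<times> real) set \<Rightarrow> (real \<times> real) set \<Rightarrow> (real \<times> real \<times> real) set" where
  "generated_set L1 L2 =
     {(x, y, w) | x y w. \<exists>p q z. p \<in> L1 \<and> q \<in> L2 \<and> (x, y) = (1/2) *\<^sub>R (p + q)
                    \<and> 2 * z = dist p q \<and> (w = z \<or> w = - z)}"

definition planar :: "(real \<times> real \<times> real) set \<Rightarrow> bool" where
  "planar S \<longleftrightarrow> (\<exists>n c. n \<noteq> 0 \<and> S \<subseteq> {p. inner n p = c})"

definition half_plane :: "(real \<times> real \<times> real) set \<Rightarrow> bool" where
  "half_plane H \<longleftrightarrow> (\<exists>a u v. (\<forall>\<alpha> \<beta>. \<alpha> *\<^sub>R u + \<beta> *\<^sub>R v = 0 \<longrightarrow> \<alpha> = 0 \<and> \<beta> = 0)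
       \<and> H = {a + s *\<^sub>R u + t *\<^sub>R v | s t. t \<ge> 0})"

definition proj_xy :: "real \<times> real \<times> real \<Rightarrow> real \<times> real" where
  "proj_xy p = (fst p, fst (snd p))"

end

theory Submission
  imports Defs
begin

text \<open>If the generated set lies in a plane, that plane is vertical: the set is symmetric under
  z \<mapsto> -z and contains points of positive height. Its normal is then orthogonal to both
  lines, so the lines are parallel, say c + h + \<real>u and c - h + \<real>u with h \<bottom> u.
  For such lines the generated set is the vertical plane over the midline c + \<real>u with the
  open band |z| < |h| removed, i.e. two half planes at distance 2|h|. Hence the set determines
  the midline (its projection) and |h| (its least height), and the generating lines are exactly
  the two translates of the midline at distance |h| from it.\<close>

definition line :: "'a::real_vector \<Rightarrow> 'a \<Rightarrow> 'a set" where
  "line a v = {a + t *\<^sub>R v | t. True}"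

lemma plane_line_iff_line: "plane_line L \<longleftrightarrow> (\<exists>a v. v \<noteq> 0 \<and> L = line a v)"
  unfolding plane_line_def line_def ..

lemma base_in_line: "a \<in> line a v"
  unfolding line_def by (auto intro: exI[of _ 0])

lemma in_lineI: "a + t *\<^sub>R v \<in> line a v"
  unfolding line_def by blast

lemma line_shift_base: "line (a + k *\<^sub>R v) v = line a v"
proof -
  have "a + k *\<^sub>R v + t *\<^sub>R v = a + (k + t) *\<^sub>R v" "a + s *\<^sub>R v = a + k *\<^sub>R v + (s - k) *\<^sub>R v"
    for s t by (simp_all add: algebra_simps)
  then show ?thesis unfolding line_def by blast
qed

lemma line_scale_direction:
  assumes "k \<noteq> 0"
  shows "line a (k *\<^sub>R v) = line a v"
proof -
  have "a + t *\<^sub>R (k *\<^sub>R v) = a + (t * k) *\<^sub>R v" "a + s *\<^sub>R v = a + (s / k) *\<^sub>R (k *\<^sub>R v)"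
    for s t using assms by simp_all
  then show ?thesis unfolding line_def by blast
qed

lemma translation_image_line: "(\<lambda>p. w + p) ` line a v = line (a + w) v"
  unfolding line_def by (auto simp: algebra_simps image_iff)

lemma norm_add_orthogonal_unit:
  fixes h u :: "'a::real_inner"
  assumes "norm u = 1" and "inner h u = 0"
  shows "norm (h + t *\<^sub>R u) = sqrt ((norm h)\<^sup>2 + t\<^sup>2)"
proof -
  have "orthogonal h (t *\<^sub>R u)" using assms(2) by (simp add: orthogonal_def)
  then have "(norm (h + t *\<^sub>R u))\<^sup>2 = (norm h)\<^sup>2 + t\<^sup>2"
    using assms(1) by (simp add: norm_add_Pythagorean power_mult_distrib)
  then show ?thesis by (metis norm_ge_zero real_sqrt_unique)
qed

lemma norm_le_norm_add_orthogonal_unit: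
  fixes h u :: "'a::real_inner"
  assumes "norm u = 1" and "inner h u = 0"
  shows "norm h \<le> norm (h + t *\<^sub>R u)"
  unfolding norm_add_orthogonal_unit[OF assms] by (simp add: real_le_rsqrt)

lemma generated_set_iff:
  "(x, y, w) \<in> generated_set L1 L2 \<longleftrightarrow>
     (\<exists>p\<in>L1. \<exists>q\<in>L2. (x, y) = (1/2) *\<^sub>R (p + q) \<and> dist p q = 2 * \<bar>w\<bar>)"
proof -
  have "(\<exists>z. 2 * z = d \<and> (w = z \<or> w = - z)) \<longleftrightarrow> d = 2 * \<bar>w\<bar>" if "d \<ge> 0" for d :: real
  proof
    show "\<exists>z. 2 * z = d \<and> (w = z \<or> w = - z)" if "d = 2 * \<bar>w\<bar>"
      using that by (intro exI[of _ "\<bar>w\<bar>"]) auto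
  qed (use that in auto)
  then show ?thesis unfolding generated_set_def by (simp add: Bex_def)
qed

definition beyond_height :: "(real \<times> real) set \<Rightarrow> real \<Rightarrow> (real \<times> real \<times> real) set" where
  "beyond_height P r = {(x, y, w) | x y w. (x, y) \<in> P \<and> r \<le> \<bar>w\<bar>}"

lemma generated_set_parallel_lines:
  fixes c h u :: "real \<times> real"
  assumes u: "norm u = 1" and hu: "inner h u = 0"
  shows "generated_set (line (c + h) u) (line (c - h) u) = beyond_height (line c u) (norm h)"
proof (intro set_eqI iffI)
  fix P assume P_in: "P \<in> generated_set (line (c + h) u) (line (c - h) u)"
  obtain x y w where P: "P = (x, y, w)" by (cases P)
  obtain p q where p: "p \<in> line (c + h) u" and q: "q \<in> line (c - h) u"
    and mid: "(x, y) = (1/2) *\<^sub>R (p + q)" and d: "dist p q = 2 * \<bar>w\<bar>"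
    using P_in unfolding P generated_set_iff by blast
  obtain t s where p_eq: "p = c + h + t *\<^sub>R u" and q_eq: "q = c - h + s *\<^sub>R u"
    using p q unfolding line_def by blast
  have "(x, y) = c + ((t + s) / 2) *\<^sub>R u"
    using mid unfolding p_eq q_eq by (simp add: algebra_simps scaleR_add_left[symmetric] del: scaleR_add_left)
  then have "(x, y) \<in> line c u" using in_lineI by metis
  moreover have "2 * norm h \<le> 2 * \<bar>w\<bar>"
  proof -
    have "p - q = 2 *\<^sub>R h + (t - s) *\<^sub>R u"
      unfolding p_eq q_eq by (simp add: algebra_simps scaleR_2)
    then show ?thesis
      using d norm_le_norm_add_orthogonal_unit[OF u, of "2 *\<^sub>R h" "t - s"] hu
      by (simp add: dist_norm)
  qed
  ultimately show "P \<in> beyond_height (line c u) (norm h)"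
    unfolding P beyond_height_def by simp
next
  fix P assume "P \<in> beyond_height (line c u) (norm h)"
  then obtain x y w r where P: "P = (x, y, w)" and xy: "(x, y) = c + r *\<^sub>R u"
    and hw: "norm h \<le> \<bar>w\<bar>"
    unfolding beyond_height_def line_def by blast
  \<comment> \<open>\<delta> is the offset along u that gives the segment between the two lines length 2 |w|\<close>
  define \<delta> where "\<delta> = 2 * sqrt (w\<^sup>2 - (norm h)\<^sup>2)"
  have "(norm h)\<^sup>2 \<le> w\<^sup>2" using power_mono[OF hw norm_ge_zero, of 2] by simp
  then have \<delta>2: "\<delta>\<^sup>2 = 4 * w\<^sup>2 - 4 * (norm h)\<^sup>2"
    unfolding \<delta>_def by (simp add: power_mult_distrib)
  define p where "p = c + h + (r + \<delta>/2) *\<^sub>R u"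
  define q where "q = c - h + (r - \<delta>/2) *\<^sub>R u"
  have "p - q = 2 *\<^sub>R h + \<delta> *\<^sub>R u"
    unfolding p_def q_def by (simp add: algebra_simps scaleR_2 flip: scaleR_add_left)
  then have "dist p q = sqrt ((norm (2 *\<^sub>R h))\<^sup>2 + \<delta>\<^sup>2)"
    using norm_add_orthogonal_unit[OF u, of "2 *\<^sub>R h" \<delta>] hu by (simp add: dist_norm)
  also have "\<dots> = 2 * \<bar>w\<bar>" using \<delta>2 by (simp add: power_mult_distrib real_sqrt_mult)
  finally have "dist p q = 2 * \<bar>w\<bar>" .
  moreover have "(x, y) = (1/2) *\<^sub>R (p + q)"
    unfolding xy p_def q_def by (simp add: algebra_simps scaleR_add_left[symmetric] del: scaleR_add_left)
  moreover have "p \<in> line (c + h) u" "q \<in> line (c - h) u"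
    unfolding p_def q_def by (rule in_lineI)+
  ultimately show "P \<in> generated_set (line (c + h) u) (line (c - h) u)"
    unfolding P generated_set_iff by blast
qed

lemma orthogonal_to_same_imp_multiple:
  fixes a b u :: "real \<times> real"
  assumes "inner a u = 0" and "inner b u = 0" and "u \<noteq> 0" and "b \<noteq> 0"
  shows "\<exists>k. a = k *\<^sub>R b"
proof -
  obtain a1 a2 b1 b2 u1 u2 where abu: "a = (a1, a2)" "b = (b1, b2)" "u = (u1, u2)"
    by (metis prod.collapse)
  have ortho: "a1 * u1 + a2 * u2 = 0" "b1 * u1 + b2 * u2 = 0" using assms(1,2) abu by auto
  have "(a1 * b2 - a2 * b1) * u1 = 0" "(a1 * b2 - a2 * b1) * u2 = 0" using ortho by algebra+
  then have det: "a1 * b2 - a2 * b1 = 0" using assms(3) abu by (auto simp: zero_prod_def)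
  have bb: "b1 * b1 + b2 * b2 \<noteq> 0" using assms(4) abu by (auto simp: zero_prod_def)
  have "a = ((a1 * b1 + a2 * b2) / (b1 * b1 + b2 * b2)) *\<^sub>R b"
    using bb det abu by (auto simp: field_simps)
  then show ?thesis ..
qed

lemma planar_generated_set_normal:
  assumes "planar (generated_set L1 L2)" and "p0 \<in> L1" and "q0 \<in> L2" and "p0 \<noteq> q0"
  obtains n c where "n \<noteq> 0" and "\<And>p q. p \<in> L1 \<Longrightarrow> q \<in> L2 \<Longrightarrow> inner n (p + q) = c"
proof -
  obtain N c0 where "N \<noteq> 0" and plane: "generated_set L1 L2 \<subseteq> {z. inner N z = c0}"
    using assms(1) unfolding planar_def by blast
  obtain n1 n2 n3 where N: "N = (n1, n2, n3)" by (metis prod.collapse)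
  define n where "n = (n1, n2)"
  \<comment> \<open>the set is symmetric under w \<mapsto> -w, so the plane must be vertical\<close>
  have both: "inner n (p + q) = 2 * c0 \<and> n3 * dist p q = 0" if "p \<in> L1" "q \<in> L2" for p q
  proof -
    obtain x y where xy: "(x, y) = (1/2) *\<^sub>R (p + q)" by (metis prod.collapse)
    have "(x, y, dist p q / 2) \<in> generated_set L1 L2" "(x, y, - dist p q / 2) \<in> generated_set L1 L2"
      unfolding generated_set_iff using that xy by auto
    then have "inner N (x, y, dist p q / 2) = c0" "inner N (x, y, - dist p q / 2) = c0"
      using plane by blast+
    then have "n1 * x + n2 * y + n3 * (dist p q / 2) = c0" "n1 * x + n2 * y - n3 * (dist p q / 2) = c0"
      unfolding N by simp_all
    then have "n1 * x + n2 * y = c0" "n3 * (dist p q / 2) = 0" by linarith+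
    moreover have "inner n (p + q) = 2 * (n1 * x + n2 * y)"
      using xy unfolding n_def by (cases p, cases q) (simp add: algebra_simps)
    ultimately show ?thesis by simp
  qed
  have "n3 = 0" using both[OF assms(2,3)] assms(4) by simp
  then have "n \<noteq> 0" using \<open>N \<noteq> 0\<close> unfolding N n_def by (simp add: zero_prod_def)
  then show thesis using both that by blast
qed

lemma planar_generated_set_lines_parallel:
  fixes a1 a2 v1 v2 :: "real \<times> real"
  assumes "v1 \<noteq> 0" and "v2 \<noteq> 0" and "planar (generated_set (line a1 v1) (line a2 v2))"
  obtains k where "k \<noteq> 0" and "v2 = k *\<^sub>R v1"
proof -
  obtain q0 where "q0 \<in> line a2 v2" "a1 \<noteq> q0"
    using assms(2) base_in_line[of a2 v2] in_lineI[of a2 1 v2] by (metis add_cancel_left_right scaleR_one)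
  then obtain n c where "n \<noteq> 0" and n: "\<And>p q. p \<in> line a1 v1 \<Longrightarrow> q \<in> line a2 v2 \<Longrightarrow> inner n (p + q) = c"
    using planar_generated_set_normal[OF assms(3) base_in_line] by blast
  have "inner n (a1 + 1 *\<^sub>R v1 + a2) = inner n (a1 + a2)"
       "inner n (a1 + (a2 + 1 *\<^sub>R v2)) = inner n (a1 + a2)"
    using n in_lineI base_in_line by metis+
  then have "inner v1 n = 0" "inner v2 n = 0" by (simp_all add: inner_add_right inner_commute)
  then obtain k where k: "v2 = k *\<^sub>R v1"
    using orthogonal_to_same_imp_multiple[OF _ _ \<open>n \<noteq> 0\<close> assms(1)] by blast
  then have "k \<noteq> 0" using assms(2) by auto
  with k that show thesis by blast
qed

lemma parallel_lines_midline_form: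
  fixes a1 a2 v :: "'a::real_inner"
  assumes "v \<noteq> 0" and "line a1 v \<noteq> line a2 v"
  obtains c h u where "norm u = 1" and "inner h u = 0" and "h \<noteq> 0"
    and "line a1 v = line (c + h) u" and "line a2 v = line (c - h) u"
proof -
  define u where "u = (1 / norm v) *\<^sub>R v"
  have u: "norm u = 1" unfolding u_def using assms(1) by simp
  have "v = norm v *\<^sub>R u" unfolding u_def using assms(1) by simp
  then have line_u: "line a v = line a u" for a using line_scale_direction assms(1) by (metis norm_eq_zero)
  define e where "e = (a1 - a2) - inner (a1 - a2) u *\<^sub>R u"
  have eu: "inner e u = 0" unfolding e_def using u by (simp add: inner_diff_left dot_square_norm)
  have "a1 = (a2 + e) + inner (a1 - a2) u *\<^sub>R u" unfolding e_def by simp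
  then have L1: "line a1 v = line (a2 + e) u" using line_u line_shift_base by metis
  have "e \<noteq> 0" using assms(2) L1 line_u by auto
  define h where "h = (1/2) *\<^sub>R e"
  have "a2 + e = (a2 + h) + h" "a2 = (a2 + h) - h"
    unfolding h_def by (simp_all add: algebra_simps flip: scaleR_add_left)
  then have "line a1 v = line ((a2 + h) + h) u" "line a2 v = line ((a2 + h) - h) u"
    using L1 line_u[of a2] by (simp_all only:)
  moreover have "inner h u = 0" "h \<noteq> 0" unfolding h_def using eu \<open>e \<noteq> 0\<close> by simp_all
  ultimately show thesis using that[OF u] by blast
qed

lemma setdist_parallel_lines:
  fixes c h u :: "'a::real_inner"
  assumes u: "norm u = 1" and hu: "inner h u = 0"
  shows "setdist (line (c + h) u) (line c u) = norm h"
proof -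
  have "setdist (line (c + h) u) (line c u) = dist (c + h) c"
  proof (rule setdist_unique[OF base_in_line base_in_line])
    fix p q assume "p \<in> line (c + h) u \<and> q \<in> line c u"
    then obtain t s where "p = c + h + t *\<^sub>R u" "q = c + s *\<^sub>R u" unfolding line_def by blast
    then have "p - q = h + (t - s) *\<^sub>R u" by (simp add: algebra_simps)
    then show "dist (c + h) c \<le> dist p q"
      using norm_le_norm_add_orthogonal_unit[OF u hu] by (simp add: dist_norm)
  qed
  then show ?thesis by (simp add: dist_norm)
qed

lemma translates_at_setdist:
  fixes c h u :: "real \<times> real"
  assumes u: "norm u = 1" and hu: "inner h u = 0" and "h \<noteq> 0"
  shows "{L. (\<exists>w. L = (\<lambda>p. w + p) ` line c u) \<and> setdist L (line c u) = norm h}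
         = {line (c + h) u, line (c - h) u}"
proof (intro set_eqI iffI)
  fix L assume "L \<in> {L. (\<exists>w. L = (\<lambda>p. w + p) ` line c u) \<and> setdist L (line c u) = norm h}"
  then obtain w where L: "L = line (c + w) u" and sd: "setdist L (line c u) = norm h"
    by (auto simp: translation_image_line)
  \<comment> \<open>in the plane, the part of w orthogonal to u is a multiple of h\<close>
  have "inner (w - inner w u *\<^sub>R u) u = 0" using u by (simp add: inner_diff_left dot_square_norm)
  moreover have "u \<noteq> 0" using u by auto
  ultimately obtain \<mu> where "w - inner w u *\<^sub>R u = \<mu> *\<^sub>R h"
    using orthogonal_to_same_imp_multiple[OF _ hu _ \<open>h \<noteq> 0\<close>] by blast
  then have "c + w = (c + \<mu> *\<^sub>R h) + inner w u *\<^sub>R u" by (simp add: algebra_simps)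
  then have L_eq: "L = line (c + \<mu> *\<^sub>R h) u" using L line_shift_base by metis
  have "\<bar>\<mu>\<bar> * norm h = norm h"
    using sd setdist_parallel_lines[OF u, of "\<mu> *\<^sub>R h" c] hu unfolding L_eq by simp
  then have "\<mu> = 1 \<or> \<mu> = -1" using \<open>h \<noteq> 0\<close> by (simp add: abs_if split: if_splits)
  then show "L \<in> {line (c + h) u, line (c - h) u}" unfolding L_eq by auto
next
  fix L assume "L \<in> {line (c + h) u, line (c - h) u}"
  then obtain k where k: "k = h \<or> k = - h" and L: "L = line (c + k) u"
    by (metis diff_conv_add_uminus empty_iff insert_iff)
  have "norm k = norm h" "inner k u = 0" using k hu by auto
  then have "setdist L (line c u) = norm h" unfolding L using setdist_parallel_lines[OF u] by simp
  moreover have "L = (\<lambda>p. k + p) ` line c u" unfolding L by (rule translation_image_line[symmetric])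
  ultimately show "L \<in> {L. (\<exists>w. L = (\<lambda>p. w + p) ` line c u) \<and> setdist L (line c u) = norm h}"
    by blast
qed

lemma half_plane_over_line:
  fixes c u :: "real \<times> real"
  assumes "u \<noteq> 0" and \<sigma>: "\<sigma> = 1 \<or> \<sigma> = -1"
  shows "half_plane {(x, y, w) | x y w. (x, y) \<in> line c u \<and> r \<le> \<sigma> * w}"
proof -
  define a :: "real \<times> real \<times> real" where "a = (fst c, snd c, \<sigma> * r)"
  define u' :: "real \<times> real \<times> real" where "u' = (fst u, snd u, 0)"
  define v' :: "real \<times> real \<times> real" where "v' = (0, 0, \<sigma>)"
  have "\<alpha> = 0 \<and> \<beta> = 0" if "\<alpha> *\<^sub>R u' + \<beta> *\<^sub>R v' = 0" for \<alpha> \<beta>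
  proof -
    have "\<beta> = 0" "\<alpha> *\<^sub>R u = 0" using that \<sigma> unfolding u'_def v'_def by (auto simp: prod_eq_iff)
    then show ?thesis using assms(1) by simp
  qed
  moreover have "{(x, y, w) | x y w. (x, y) \<in> line c u \<and> r \<le> \<sigma> * w}
                   = {a + s *\<^sub>R u' + t *\<^sub>R v' | s t. t \<ge> 0}"
  proof (intro set_eqI iffI)
    fix P assume "P \<in> {(x, y, w) | x y w. (x, y) \<in> line c u \<and> r \<le> \<sigma> * w}"
    then obtain x y w s where P: "P = (x, y, w)" and xy: "(x, y) = c + s *\<^sub>R u" and w: "r \<le> \<sigma> * w"
      unfolding line_def by blast
    have "P = a + s *\<^sub>R u' + (\<sigma> * w - r) *\<^sub>R v'"
      using xy \<sigma> unfolding P a_def u'_def v'_def by (auto simp: prod_eq_iff algebra_simps)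
    then show "P \<in> {a + s *\<^sub>R u' + t *\<^sub>R v' | s t. t \<ge> 0}" using w by force
  next
    fix P assume "P \<in> {a + s *\<^sub>R u' + t *\<^sub>R v' | s t. t \<ge> 0}"
    then obtain s t where P: "P = a + s *\<^sub>R u' + t *\<^sub>R v'" and "t \<ge> 0" by blast
    have "(fst c + s * fst u, snd c + s * snd u) = c + s *\<^sub>R u" by (simp add: prod_eq_iff)
    then have "(fst c + s * fst u, snd c + s * snd u) \<in> line c u" by (metis in_lineI)
    moreover have "r \<le> \<sigma> * (\<sigma> * r + t * \<sigma>)" using \<sigma> \<open>t \<ge> 0\<close> by auto
    ultimately show "P \<in> {(x, y, w) | x y w. (x, y) \<in> line c u \<and> r \<le> \<sigma> * w}"
      unfolding P a_def u'_def v'_def by simp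
  qed
  ultimately show ?thesis unfolding half_plane_def by blast
qed

lemma beyond_height_line_split:
  fixes c u :: "real \<times> real"
  assumes "u \<noteq> 0" and "r > 0"
  obtains H1 H2 where "half_plane H1" and "half_plane H2" and "H1 \<inter> H2 = {}"
    and "beyond_height (line c u) r = H1 \<union> H2" and "setdist H1 H2 = 2 * r"
proof -
  define H1 where "H1 = {(x, y, w) | x y w. (x, y) \<in> line c u \<and> r \<le> 1 * w}"
  define H2 where "H2 = {(x, y, w) | x y w. (x, y) \<in> line c u \<and> r \<le> (-1) * w}"
  have "half_plane H1" "half_plane H2"
    unfolding H1_def H2_def by (rule half_plane_over_line[OF assms(1)], simp)+
  moreover have "H1 \<inter> H2 = {}" unfolding H1_def H2_def using assms(2) by auto
  moreover have "beyond_height (line c u) r = H1 \<union> H2" unfolding H1_def H2_def beyond_height_def by auto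
  moreover have "setdist H1 H2 = 2 * r"
  proof -
    have top: "(fst c, snd c, r) \<in> H1" and bottom: "(fst c, snd c, - r) \<in> H2"
      unfolding H1_def H2_def using base_in_line[of c u] by simp_all
    have height: "dist (fst c, snd c, r) (fst c, snd c, - r) = 2 * r"
      using assms(2) by (simp add: dist_Pair_Pair dist_real_def real_sqrt_mult)
    have "setdist H1 H2 = dist (fst c, snd c, r) (fst c, snd c, - r)"
    proof (rule setdist_unique[OF top bottom])
      fix p q assume "p \<in> H1 \<and> q \<in> H2"
      then have "2 * r \<le> dist (snd (snd p)) (snd (snd q))"
        unfolding H1_def H2_def by (auto simp: dist_real_def)
      also have "\<dots> \<le> dist p q" using dist_snd_le order_trans by metis
      finally show "dist (fst c, snd c, r) (fst c, snd c, - r) \<le> dist p q" unfolding height .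
    qed
    then show ?thesis unfolding height .
  qed
  ultimately show thesis by (rule that)
qed

lemma proj_xy_beyond_height: "proj_xy ` beyond_height P r = P"
proof (intro set_eqI iffI)
  fix p assume "p \<in> P"
  then have "(fst p, snd p, \<bar>r\<bar>) \<in> beyond_height P r" unfolding beyond_height_def by simp
  moreover have "p = proj_xy (fst p, snd p, \<bar>r\<bar>)" unfolding proj_xy_def by simp
  ultimately show "p \<in> proj_xy ` beyond_height P r" by blast
qed (auto simp: beyond_height_def proj_xy_def)

lemma beyond_height_inject:
  assumes eq: "beyond_height P r = beyond_height P' r'"
    and "P \<noteq> {}" and "0 \<le> r" and "0 \<le> r'"
  shows "P = P'" and "r = r'"
proof -
  show "P = P'" using proj_xy_beyond_height eq by metis
  obtain x y where "(x, y) \<in> P" using \<open>P \<noteq> {}\<close> by auto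
  then have "(x, y, r) \<in> beyond_height P r" "(x, y, r') \<in> beyond_height P' r'"
    using assms(3,4) \<open>P = P'\<close> unfolding beyond_height_def by auto
  then have "(x, y, r) \<in> beyond_height P' r'" "(x, y, r') \<in> beyond_height P r"
    using eq by simp_all
  then show "r = r'" using assms(3,4) unfolding beyond_height_def by auto
qed

lemma planar_generated_set_structure:
  assumes "plane_line L1" and "plane_line L2" and "L1 \<noteq> L2"
    and "planar (generated_set L1 L2)"
  obtains c u r where "u \<noteq> 0" and "r > 0" and "generated_set L1 L2 = beyond_height (line c u) r"
    and "{L1, L2} = {L. (\<exists>w. L = (\<lambda>p. w + p) ` line c u) \<and> setdist L (line c u) = r}"
proof -
  obtain a1 a2 v1 v2 where "v1 \<noteq> 0" "v2 \<noteq> 0" and L1: "L1 = line a1 v1" and L2: "L2 = line a2 v2"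
    using assms(1,2) unfolding plane_line_iff_line by blast
  then obtain k where "k \<noteq> 0" "v2 = k *\<^sub>R v1"
    using planar_generated_set_lines_parallel assms(4) by metis
  then have "L2 = line a2 v1" unfolding L2 by (simp add: line_scale_direction)
  then obtain c h u where u: "norm u = 1" and hu: "inner h u = 0" and "h \<noteq> 0"
    and L1_eq: "L1 = line (c + h) u" and L2_eq: "L2 = line (c - h) u"
    using parallel_lines_midline_form[OF \<open>v1 \<noteq> 0\<close>] assms(3) L1 by metis
  show thesis
  proof (rule that)
    show "u \<noteq> 0" "norm h > 0" using u \<open>h \<noteq> 0\<close> by auto
    show "generated_set L1 L2 = beyond_height (line c u) (norm h)"
      unfolding L1_eq L2_eq by (rule generated_set_parallel_lines[OF u hu])
    show "{L1, L2} = {L. (\<exists>w. L = (\<lambda>p. w + p) ` line c u) \<and> setdist L (line c u) = norm h}"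
      unfolding L1_eq L2_eq by (rule translates_at_setdist[OF u hu \<open>h \<noteq> 0\<close>, symmetric])
  qed
qed

lemma planar_generated_set_unique_lines:
  assumes "plane_line L1" and "plane_line L2" and "L1 \<noteq> L2" and "planar (generated_set L1 L2)"
    and "plane_line M1" and "plane_line M2" and "M1 \<noteq> M2"
    and same: "generated_set M1 M2 = generated_set L1 L2"
  shows "{M1, M2} = {L1, L2}"
proof -
  obtain c u r where "u \<noteq> 0" "r > 0" and S: "generated_set L1 L2 = beyond_height (line c u) r"
    and T: "{L1, L2} = {L. (\<exists>w. L = (\<lambda>p. w + p) ` line c u) \<and> setdist L (line c u) = r}"
    by (rule planar_generated_set_structure[OF assms(1-4)])
  have "planar (generated_set M1 M2)" using same assms(4) by simp
  then obtain c' u' r' where "u' \<noteq> 0" "r' > 0" and S': "generated_set M1 M2 = beyond_height (line c' u') r'"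
    and T': "{M1, M2} = {L. (\<exists>w. L = (\<lambda>p. w + p) ` line c' u') \<and> setdist L (line c' u') = r'}"
    by (rule planar_generated_set_structure[OF assms(5-7)])
  have "beyond_height (line c' u') r' = beyond_height (line c u) r" using S S' same by simp
  moreover have "line c' u' \<noteq> {}" using base_in_line by blast
  ultimately have "line c' u' = line c u" "r' = r"
    using beyond_height_inject \<open>r' > 0\<close> \<open>r > 0\<close> by (metis less_imp_le)+
  then show ?thesis using T T' by simp
qed

theorem corollary3p9:
  fixes L1 L2 :: "(real \<times> real) set"
  assumes "plane_line L1" and "plane_line L2" and "L1 \<noteq> L2"
    and "planar (generated_set L1 L2)"
  shows "(\<forall>M1 M2. plane_line M1 \<and> plane_line M2 \<and> M1 \<noteq> M2
                 \<and> generated_set M1 M2 = generated_set L1 L2 \<longrightarrow> {M1, M2} = {L1, L2})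
       \<and> (\<exists>H1 H2. half_plane H1 \<and> half_plane H2 \<and> H1 \<inter> H2 = {}
                 \<and> generated_set L1 L2 = H1 \<union> H2
                 \<and> plane_line (proj_xy ` generated_set L1 L2)
                 \<and> {L1, L2} = {L. (\<exists>v. L = (\<lambda>p. v + p) ` (proj_xy ` generated_set L1 L2))
                                 \<and> setdist L (proj_xy ` generated_set L1 L2) = setdist H1 H2 / 2})"
proof -
  obtain c u r where "u \<noteq> 0" "r > 0" and S: "generated_set L1 L2 = beyond_height (line c u) r"
    and T: "{L1, L2} = {L. (\<exists>w. L = (\<lambda>p. w + p) ` line c u) \<and> setdist L (line c u) = r}"
    by (rule planar_generated_set_structure[OF assms])
  obtain H1 H2 where "half_plane H1" "half_plane H2" "H1 \<inter> H2 = {}"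
    and "beyond_height (line c u) r = H1 \<union> H2" and "setdist H1 H2 = 2 * r"
    by (rule beyond_height_line_split[OF \<open>u \<noteq> 0\<close> \<open>r > 0\<close>])
  moreover have "proj_xy ` generated_set L1 L2 = line c u" unfolding S by (rule proj_xy_beyond_height)
  moreover have "plane_line (line c u)" using \<open>u \<noteq> 0\<close> unfolding plane_line_iff_line by blast
  moreover have "setdist H1 H2 / 2 = r" using \<open>setdist H1 H2 = 2 * r\<close> by simp
  ultimately show ?thesis
    using planar_generated_set_unique_lines[OF assms] S T
    by (intro conjI allI impI exI[of _ H1] exI[of _ H2]) auto
qed

end
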